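(* Let $q>1$ and $0<u<1$. Choose $\lambda'_1=a\ge1$ with probability \[ Q(a)=\frac{\prod_{r\ge1}(1-u/q^r)\,u^{a-1}}{q^{a^2-a}(\frac uq)_a(\frac1q)_{a-1}}, \] and then define $\lambda'_2,\lambda'_3,\dots$ successively by the Markov rule that if $\lambda'_i=a$ then $\lambda'_{i+1}=b$ ($0\le b\le a$) with probability \[ K(a,b)=\frac{u^b(\frac1q)_a(\frac uq)_a}{q^{b^2}(\frac1q)_{a-b}(\frac1q)_b(\frac uq)_b}. \] Then the partition with conjugate $(\lambda'_1,\lambda'_2,\dots)$ is distributed according to $N_{u,q}$.
   Context: $(x)_i=\prod_{j=1}^i(1-x^j)$ with $(x)_0=1$; in particular $(\frac uq)_i=\prod_{j=1}^i(1-u/q^j)$. $N_{u,q}(\lambda)=\prod_{r\ge1}(1-u/q^r)\frac{u^{|\lambda|-1}(q^{\lambda'_1}-1)}{\prod_i q^{(\lambda'_i)^2}(\frac1q)_{m_i(\lambda)}}$ for partitions $\lambda$ of positive integers, where $\lambda'$ is the conjugate partition and $m_i(\lambda)$ the multiplicity of part $i$. *)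

theory Defs
  imports "HOL-Analysis.Analysis"
begin

definition is_partition :: "nat list \<Rightarrow> bool" where
  "is_partition lam \<longleftrightarrow> sorted_wrt (\<ge>) lam \<and> 0 \<notin> set lam"

definition conj_part :: "nat list \<Rightarrow> nat list" where
  "conj_part lam = map (\<lambda>i. length (filter (\<lambda>p. i \<le> p) lam)) [1..<Max (insert 0 (set lam)) + 1]"

text \<open>poch x q i = prod_{j=1}^i (1 - x/q^j); so (u/q)_i = poch u q i and (1/q)_i = poch 1 q i.\<close>
definition poch :: "real \<Rightarrow> real \<Rightarrow> nat \<Rightarrow> real" where
  "poch x q i = (\<Prod>j\<in>{1..i}. 1 - x / q ^ j)"

definition Pinf :: "real \<Rightarrow> real \<Rightarrow> real" where
  "Pinf u q = prodinf (\<lambda>r. 1 - u / q ^ Suc r)"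

definition N_uq :: "real \<Rightarrow> real \<Rightarrow> nat list \<Rightarrow> real" where
  "N_uq u q lam =
     Pinf u q * u ^ (sum_list lam - 1) * (q ^ (conj_part lam ! 0) - 1) /
     (\<Prod>i\<in>{1..length (conj_part lam)}.
        q ^ ((conj_part lam ! (i - 1))\<^sup>2) * poch 1 q (count_list lam i))"

definition Qstart :: "real \<Rightarrow> real \<Rightarrow> nat \<Rightarrow> real" where
  "Qstart u q a = Pinf u q * u ^ (a - 1) / (q ^ (a\<^sup>2 - a) * poch u q a * poch 1 q (a - 1))"

definition Ktrans :: "real \<Rightarrow> real \<Rightarrow> nat \<Rightarrow> nat \<Rightarrow> real" where
  "Ktrans u q a b = u ^ b * poch 1 q a * poch u q a /
     (q ^ (b\<^sup>2) * poch 1 q (a - b) * poch 1 q b * poch u q b)"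

text \<open>Probability that the Markov chain (start Q, transitions K) produces the sequence
  c_1, ..., c_k, 0, 0, ...  (once at 0 it stays at 0, since K(0,0) = 1).\<close>
definition chain_prob :: "real \<Rightarrow> real \<Rightarrow> nat list \<Rightarrow> real" where
  "chain_prob u q c = Qstart u q (c ! 0) *
     (\<Prod>i<length c. Ktrans u q (c ! i) ((c @ [0]) ! Suc i))"

end

theory Submission
  imports Defs
begin

(* In K(a,b) the factors (1/q)_a (u/q)_a depend only on a and the factors (1/q)_b (u/q)_b
   only on b, so along the chain lambda'_1, lambda'_2, ..., 0 they telescope: the product of
   the transition probabilities is u^(lambda'_2 + lambda'_3 + ...) (1/q)_a (u/q)_a over
   q^(lambda'_2^2 + lambda'_3^2 + ...) prod_i (1/q)_(lambda'_i - lambda'_(i+1)), with a = lambda'_1.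
   The differences lambda'_i - lambda'_(i+1) are the multiplicities m_i(lambda), which yields the
   denominator of N_{u,q}; multiplying by Q(a) supplies the remaining factors. *)

lemma poch_0 [simp]: "poch x q 0 = 1"
  by (simp add: poch_def)

lemma poch_Suc: "poch x q (Suc n) = poch x q n * (1 - x / q ^ Suc n)"
  by (simp add: poch_def)

lemma poch_nonzero:
  assumes "q > 1" "x \<le> 1"
  shows "poch x q n \<noteq> 0"
proof -
  have "1 - x / q ^ j \<noteq> 0" if "j \<in> {1..n}" for j
  proof -
    have "q ^ j > 1"
      using assms that by (simp add: one_less_power)
    then have "x / q ^ j < 1"
      using assms by (simp add: divide_less_eq)
    then show ?thesis
      by linarith
  qed
  then show ?thesis
    unfolding poch_def using prod_zero_iff[of "{1..n}" "\<lambda>j. 1 - x / q ^ j"] by blast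
qed

lemma Ktrans_mult_denominator:
  assumes "q > 1" "u \<le> 1"
  shows "Ktrans u q a b * q ^ b\<^sup>2 * poch 1 q (a - b) * poch 1 q b * poch u q b
       = u ^ b * poch 1 q a * poch u q a"
  using assms poch_nonzero[of q] by (simp add: Ktrans_def field_simps)

lemma Qstart_mult_poch:
  assumes "q > 1" "u \<le> 1" "a \<ge> 1"
  shows "Qstart u q a * poch 1 q a * poch u q a
       = Pinf u q * u ^ (a - 1) * (q ^ a - 1) / q ^ a\<^sup>2"
proof -
  have "poch 1 q a = poch 1 q (a - 1) * (1 - 1 / q ^ a)"
    using assms(3) poch_Suc[of 1 q "a - 1"] by simp
  then have "Qstart u q a * poch 1 q a * poch u q a
      = Pinf u q * u ^ (a - 1) * (1 - 1 / q ^ a) / q ^ (a\<^sup>2 - a)"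
    using assms(1,2) poch_nonzero[of q] by (simp add: Qstart_def)
  also have "\<dots> = Pinf u q * u ^ (a - 1) * (q ^ a - 1) / (q ^ (a\<^sup>2 - a) * q ^ a)"
    using assms(1) by (simp add: field_simps)
  also have "q ^ (a\<^sup>2 - a) * q ^ a = q ^ a\<^sup>2"
    by (simp add: power_add[symmetric] power2_eq_square)
  finally show ?thesis .
qed

definition Ktrans_prod :: "real \<Rightarrow> real \<Rightarrow> nat list \<Rightarrow> real" where
  "Ktrans_prod u q c = (\<Prod>i<length c. Ktrans u q (c ! i) ((c @ [0]) ! Suc i))"

definition gap_poch :: "real \<Rightarrow> nat list \<Rightarrow> real" where
  "gap_poch q c = (\<Prod>i<length c. poch 1 q (c ! i - (c @ [0]) ! Suc i))"

lemma Ktrans_prod_Cons: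
  "Ktrans_prod u q (a # c) = Ktrans u q a ((c @ [0]) ! 0) * Ktrans_prod u q c"
  unfolding Ktrans_prod_def by (simp del: prod.lessThan_Suc add: prod.lessThan_Suc_shift)

lemma gap_poch_Cons: "gap_poch q (a # c) = poch 1 q (a - (c @ [0]) ! 0) * gap_poch q c"
  unfolding gap_poch_def by (simp del: prod.lessThan_Suc add: prod.lessThan_Suc_shift)

lemma gap_poch_nonzero: "q > 1 \<Longrightarrow> gap_poch q c \<noteq> 0"
  unfolding gap_poch_def using poch_nonzero[of q 1] by simp

lemma Ktrans_prod_telescope:
  assumes "q > 1" "u \<le> 1"
  shows "Ktrans_prod u q c * q ^ (\<Sum>x\<leftarrow>tl c. x\<^sup>2) * gap_poch q c
       = u ^ sum_list (tl c) * poch 1 q ((c @ [0]) ! 0) * poch u q ((c @ [0]) ! 0)"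
proof (induction c)
  case Nil
  then show ?case
    by (simp add: Ktrans_prod_def gap_poch_def)
next
  case (Cons a c)
  define b where "b = (c @ [0]) ! 0"
  have sum: "sum_list c = b + sum_list (tl c)" and
    sum_sq: "(\<Sum>x\<leftarrow>c. x\<^sup>2) = b\<^sup>2 + (\<Sum>x\<leftarrow>tl c. x\<^sup>2)"
    unfolding b_def by (cases c; simp)+
  have "Ktrans_prod u q (a # c) * q ^ (\<Sum>x\<leftarrow>tl (a # c). x\<^sup>2) * gap_poch q (a # c)
      = Ktrans u q a b * q ^ b\<^sup>2 * poch 1 q (a - b)
        * (Ktrans_prod u q c * q ^ (\<Sum>x\<leftarrow>tl c. x\<^sup>2) * gap_poch q c)"
    by (simp add: Ktrans_prod_Cons gap_poch_Cons b_def sum_sq power_add)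
  also have "\<dots> = (Ktrans u q a b * q ^ b\<^sup>2 * poch 1 q (a - b) * poch 1 q b * poch u q b)
        * u ^ sum_list (tl c)"
    using Cons.IH by (simp add: b_def)
  also have "\<dots> = u ^ sum_list c * poch 1 q a * poch u q a"
    using Ktrans_mult_denominator[OF assms] by (simp add: sum power_add)
  finally show ?case
    by simp
qed

lemma length_conj_part: "length (conj_part lam) = Max (insert 0 (set lam))"
  by (simp add: conj_part_def)

lemma conj_part_append_0_nth:
  assumes "i \<le> length (conj_part lam)"
  shows "(conj_part lam @ [0]) ! i = length (filter (\<lambda>p. Suc i \<le> p) lam)"
proof (cases "i < length (conj_part lam)")
  case True
  then show ?thesis
    by (simp add: nth_append conj_part_def del: upt_Suc)
next
  case False
  then have "\<forall>p\<in>set lam. p < Suc i"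
    using assms by (auto simp: length_conj_part less_Suc_eq_le)
  then show ?thesis
    using assms False by (simp add: nth_append filter_empty_conv not_le)
qed

lemma conj_part_diff_nth:
  assumes "i < length (conj_part lam)"
  shows "conj_part lam ! i - (conj_part lam @ [0]) ! Suc i = count_list lam (Suc i)"
proof -
  have "length (filter (\<lambda>p. Suc i \<le> p) lam)
      = length (filter (\<lambda>p. Suc (Suc i) \<le> p) lam) + count_list lam (Suc i)"
    by (induction lam) auto
  then show ?thesis
    using assms conj_part_append_0_nth[of i lam] conj_part_append_0_nth[of "Suc i" lam]
    by (simp add: nth_append)
qed

lemma conj_part_eq_length_Cons:
  assumes "0 \<notin> set lam" "lam \<noteq> []"
  shows "conj_part lam = length lam # tl (conj_part lam)"
proof -
  have pos: "\<forall>p\<in>set lam. 0 < p"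
    using assms(1) by (metis gr0I)
  have "hd lam \<in> set lam"
    using assms(2) by simp
  then have "conj_part lam \<noteq> []"
    using pos by (auto simp: length_conj_part Max_gr_iff simp flip: length_greater_0_conv)
  moreover have "conj_part lam ! 0 = length lam"
    using calculation pos conj_part_append_0_nth[of 0 lam]
    by (simp add: nth_append Suc_le_eq filter_True)
  ultimately show ?thesis
    by (cases "conj_part lam") auto
qed

lemma sum_list_conj_part: "sum_list (conj_part lam) = sum_list lam"
proof -
  define M where "M = Max (insert 0 (set lam))"
  have "(\<Sum>i=1..M. length (filter (\<lambda>p. i \<le> p) xs)) = sum_list xs"
    if "\<forall>p\<in>set xs. p \<le> M" for xs
    using that
  proof (induction xs)
    case (Cons x xs)
    have "(\<Sum>i=1..M. length (filter (\<lambda>p. i \<le> p) (x # xs)))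
        = (\<Sum>i=1..M. if i \<le> x then 1 else 0) + (\<Sum>i=1..M. length (filter (\<lambda>p. i \<le> p) xs))"
      by (auto simp: sum.distrib[symmetric] intro!: sum.cong)
    also have "(\<Sum>i=1..M. if i \<le> x then 1 else 0 :: nat) = card ({1..M} \<inter> {i. i \<le> x})"
      by (simp add: sum.If_cases)
    also have "{1..M} \<inter> {i. i \<le> x} = {1..x}"
      using Cons.prems by auto
    finally show ?case
      using Cons by simp
  qed simp
  moreover have "sum_list (conj_part lam) = (\<Sum>i=1..M. length (filter (\<lambda>p. i \<le> p) lam))"
    unfolding conj_part_def M_def[symmetric]
    by (simp add: sum_list_distinct_conv_sum_set atLeastLessThanSuc_atLeastAtMost del: upt_Suc)
  ultimately show ?thesis
    by (simp add: M_def)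
qed

lemma prod_conj_part_eq_gap_poch:
  "(\<Prod>i=1..length (conj_part lam).
      q ^ (conj_part lam ! (i - 1))\<^sup>2 * poch 1 q (count_list lam i))
   = q ^ (\<Sum>x\<leftarrow>conj_part lam. x\<^sup>2) * gap_poch q (conj_part lam)"
  by (simp add: prod.atLeast1_atMost_eq prod.distrib gap_poch_def conj_part_diff_nth
      sum_list_sum_nth atLeast0LessThan power_sum)

theorem theorem3p7:
  fixes u q :: real and lam :: "nat list"
  assumes "q > 1" and "0 < u" and "u < 1"
    and "is_partition lam" and "lam \<noteq> []"
  shows "chain_prob u q (conj_part lam) = N_uq u q lam"
proof -
  define a where "a = length lam"
  define t where "t = tl (conj_part lam)"
  have c: "conj_part lam = a # t"
    using assms(4,5) conj_part_eq_length_Cons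
    unfolding a_def t_def is_partition_def by blast
  have "a \<ge> 1"
    using assms(5) by (simp add: a_def Suc_le_eq)
  have u_exp: "sum_list lam - 1 = (a - 1) + sum_list t"
    using sum_list_conj_part[of lam] \<open>a \<ge> 1\<close> by (simp add: c)
  have nonzero: "poch 1 q a \<noteq> 0" "poch u q a \<noteq> 0" "gap_poch q (a # t) \<noteq> 0"
    using assms(1,3) poch_nonzero gap_poch_nonzero by auto
  have N: "N_uq u q lam = Pinf u q * u ^ ((a - 1) + sum_list t) * (q ^ a - 1)
      / (q ^ (a\<^sup>2 + (\<Sum>x\<leftarrow>t. x\<^sup>2)) * gap_poch q (a # t))"
    unfolding N_uq_def prod_conj_part_eq_gap_poch u_exp by (simp add: c)
  have "chain_prob u q (a # t) = (Qstart u q a * poch 1 q a * poch u q a)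
      * (Ktrans_prod u q (a # t) * q ^ (\<Sum>x\<leftarrow>t. x\<^sup>2) * gap_poch q (a # t))
      / (poch 1 q a * poch u q a * q ^ (\<Sum>x\<leftarrow>t. x\<^sup>2) * gap_poch q (a # t))"
    using nonzero assms(1) by (simp add: chain_prob_def Ktrans_prod_def)
  also have "\<dots> = Pinf u q * u ^ (a - 1) * (q ^ a - 1) / q ^ a\<^sup>2 * u ^ sum_list t
      / (q ^ (\<Sum>x\<leftarrow>t. x\<^sup>2) * gap_poch q (a # t))"
    using Qstart_mult_poch[of q u a] Ktrans_prod_telescope[of q u "a # t"]
      assms(1,3) \<open>a \<ge> 1\<close> nonzero
    by simp
  also have "\<dots> = N_uq u q lam"
    unfolding N power_add by (simp add: mult_ac)
  finally show ?thesis
    by (simp add: c)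
qed

end
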